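(* Let $X$ be a simplicial complex with vertex set $V$ and $1$-skeleton $\mathcal G$, and let $\hat d$ be a metric on $V$ such that for some constant $C>0$, $\hat d(u,v)\le C\,d_{\mathcal G}(u,v)$ for all $u,v\in V$. If $x,y\in X$ have disjoint supports, then \[\hat D(x,y)\le 3C\,d_X(x,y).\]
   Context: Points $x\in X$ have barycentric coordinates $(x_u)_{u\in V}$ (finitely many nonzero, summing to $1$); $\mathrm{supp}(x)=\{u\in V:x_u\neq0\}$. $\hat D(x,y)=\sum_{u,v\in V}x_uy_v\,\hat d(u,v)$. $d_{\mathcal G}$ is the word metric on the $1$-skeleton (every edge length $1$). For a simplex $\sigma$ and $x,y\in\sigma$, $d_\sigma(x,y)=\tfrac12\sum_{u\in V(\sigma)}|x_u-y_u|$; a path from $x$ to $y$ is a sequence $x=a_0,\dots,a_r=y$ with consecutive points in a common simplex $\sigma_i$, of length $\sum_i d_{\sigma_i}(a_{i-1},a_i)$; the $\ell^1$-path metric $d_X(x,y)$ is the infimum of lengths of such paths. *)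

theory Defs
  imports Complex_Main "HOL-Library.Extended_Real"
begin

definition simplicial_complex :: "'v set set \<Rightarrow> bool" where
  "simplicial_complex K \<longleftrightarrow>
     (\<forall>\<sigma>\<in>K. finite \<sigma> \<and> \<sigma> \<noteq> {}) \<and>
     (\<forall>\<sigma>\<in>K. \<forall>\<tau>. \<tau> \<subseteq> \<sigma> \<and> \<tau> \<noteq> {} \<longrightarrow> \<tau> \<in> K)"

definition verts :: "'v set set \<Rightarrow> 'v set" where
  "verts K = \<Union>K"

definition metric_on :: "'v set \<Rightarrow> ('v \<Rightarrow> 'v \<Rightarrow> real) \<Rightarrow> bool" where
  "metric_on V d \<longleftrightarrow>
     (\<forall>u\<in>V. \<forall>v\<in>V. d u v = 0 \<longleftrightarrow> u = v) \<and>
     (\<forall>u\<in>V. \<forall>v\<in>V. d u v = d v u) \<and>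
     (\<forall>u\<in>V. \<forall>v\<in>V. \<forall>w\<in>V. d u w \<le> d u v + d v w)"

text \<open>Points of the geometric realisation: barycentric coordinates.\<close>
definition supp :: "('v \<Rightarrow> real) \<Rightarrow> 'v set" where
  "supp x = {u. x u \<noteq> 0}"

definition point :: "'v set set \<Rightarrow> ('v \<Rightarrow> real) \<Rightarrow> bool" where
  "point K x \<longleftrightarrow> (\<forall>u. 0 \<le> x u) \<and> supp x \<in> K \<and> sum x (supp x) = 1"

definition Dhat :: "('v \<Rightarrow> 'v \<Rightarrow> real) \<Rightarrow> ('v \<Rightarrow> real) \<Rightarrow> ('v \<Rightarrow> real) \<Rightarrow> real" where
  "Dhat d x y = (\<Sum>u\<in>supp x. \<Sum>v\<in>supp y. x u * y v * d u v)"

text \<open>Word metric of the 1-skeleton (edges = 2-element simplices), \<infinity> if no edge path.\<close>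
definition edge_walk :: "'v set set \<Rightarrow> 'v \<Rightarrow> 'v \<Rightarrow> 'v list \<Rightarrow> bool" where
  "edge_walk K u v p \<longleftrightarrow> p \<noteq> [] \<and> hd p = u \<and> last p = v \<and> set p \<subseteq> verts K \<and>
     (\<forall>i. Suc i < length p \<longrightarrow> p!i \<noteq> p!Suc i \<and> {p!i, p!Suc i} \<in> K)"

definition graph_dist :: "'v set set \<Rightarrow> 'v \<Rightarrow> 'v \<Rightarrow> ereal" where
  "graph_dist K u v = Inf {ereal (real (length p - 1)) | p. edge_walk K u v p}"

definition d_simplex :: "'v set \<Rightarrow> ('v \<Rightarrow> real) \<Rightarrow> ('v \<Rightarrow> real) \<Rightarrow> real" where
  "d_simplex \<sigma> x y = (1/2) * (\<Sum>u\<in>\<sigma>. \<bar>x u - y u\<bar>)"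

definition l1_path :: "'v set set \<Rightarrow> ('v \<Rightarrow> real) \<Rightarrow> ('v \<Rightarrow> real)
     \<Rightarrow> ('v \<Rightarrow> real) list \<Rightarrow> 'v set list \<Rightarrow> bool" where
  "l1_path K x y as ss \<longleftrightarrow> as \<noteq> [] \<and> hd as = x \<and> last as = y \<and>
     (\<forall>a\<in>set as. point K a) \<and> length as = Suc (length ss) \<and>
     (\<forall>i<length ss. ss!i \<in> K \<and> supp (as!i) \<subseteq> ss!i \<and> supp (as!Suc i) \<subseteq> ss!i)"

definition path_length :: "('v \<Rightarrow> real) list \<Rightarrow> 'v set list \<Rightarrow> real" where
  "path_length as ss = (\<Sum>i<length ss. d_simplex (ss!i) (as!i) (as!Suc i))"

definition dX :: "'v set set \<Rightarrow> ('v \<Rightarrow> real) \<Rightarrow> ('v \<Rightarrow> real) \<Rightarrow> ereal" where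
  "dX K x y = Inf {ereal (path_length as ss) | as ss. l1_path K x y as ss}"

end

theory Submission
  imports Defs
begin

text \<open>Since an edge has graph length 1, every simplex has \<open>dh\<close>-diameter at most \<open>C\<close>, so for fixed
  \<open>x\<close> the map \<open>a \<mapsto> Dhat dh x a\<close> is \<open>C\<close>-Lipschitz for \<open>d_simplex \<sigma>\<close> on each simplex \<open>\<sigma>\<close>: moving
  mass \<open>t\<close> inside \<open>\<sigma>\<close> changes it by at most \<open>t C\<close>. Telescoping along an \<open>\<ell>\<^sup>1\<close>-path from \<open>x\<close> to \<open>y\<close>
  of length \<open>L\<close> gives \<open>Dhat dh x y \<le> Dhat dh x x + C L \<le> C + C L\<close>. Disjoint supports make the
  \<open>\<ell>\<^sup>1\<close>-distance of \<open>x\<close> and \<open>y\<close> equal to 2, which forces \<open>L \<ge> 1\<close>, so \<open>Dhat dh x y \<le> 2 C L\<close>.\<close>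

lemma simplicial_complex_finite:
  "simplicial_complex K \<Longrightarrow> \<sigma> \<in> K \<Longrightarrow> finite \<sigma> \<and> \<sigma> \<noteq> {}"
  unfolding simplicial_complex_def by blast

lemma simplicial_complex_subset:
  "simplicial_complex K \<Longrightarrow> \<sigma> \<in> K \<Longrightarrow> \<tau> \<subseteq> \<sigma> \<Longrightarrow> \<tau> \<noteq> {} \<Longrightarrow> \<tau> \<in> K"
  unfolding simplicial_complex_def by blast

lemma point_supp:
  assumes "simplicial_complex K" "point K a"
  shows "finite (supp a)" "supp a \<in> K"
  using assms simplicial_complex_finite unfolding point_def by auto

lemma point_sum_superset:
  assumes "point K a" "finite S" "supp a \<subseteq> S"
  shows "sum a S = 1"
proof -
  have "sum a S = sum a (supp a)"
    using assms by (intro sum.mono_neutral_right) (auto simp: supp_def)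
  then show ?thesis using assms(1) unfolding point_def by simp
qed

lemma graph_dist_edge_le_1:
  assumes "{u, v} \<in> K" "u \<noteq> v"
  shows "graph_dist K u v \<le> 1"
proof -
  have "edge_walk K u v [u, v]"
    using assms unfolding edge_walk_def verts_def by (auto simp: less_Suc_eq)
  then have "graph_dist K u v \<le> ereal (real (length [u, v] - 1))"
    unfolding graph_dist_def by (intro Inf_lower) blast
  then show ?thesis by (simp add: one_ereal_def)
qed

lemma simplex_diameter_le:
  assumes sc: "simplicial_complex K"
    and m: "metric_on (verts K) dh"
    and C: "C > 0"
    and lip: "\<forall>u\<in>verts K. \<forall>v\<in>verts K. ereal (dh u v) \<le> ereal C * graph_dist K u v"
    and \<sigma>: "\<sigma> \<in> K" and u: "u \<in> \<sigma>" and v: "v \<in> \<sigma>"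
  shows "dh u v \<le> C"
proof -
  have uv: "u \<in> verts K" "v \<in> verts K" using \<sigma> u v unfolding verts_def by auto
  show ?thesis
  proof (cases "u = v")
    case True
    then have "dh u v = 0" using m uv unfolding metric_on_def by blast
    then show ?thesis using C by simp
  next
    case False
    have "{u, v} \<in> K" by (rule simplicial_complex_subset[OF sc \<sigma>]) (use u v in auto)
    then have "graph_dist K u v \<le> 1" using False by (rule graph_dist_edge_le_1)
    then have "ereal C * graph_dist K u v \<le> ereal C"
      using C ereal_mult_left_mono[of "graph_dist K u v" 1 "ereal C"] by simp
    then show ?thesis using lip uv by (metis ereal_less_eq(3) order_trans)
  qed
qed

text \<open>Pairing a signed measure of total mass \<open>0\<close> with a function of oscillation at most \<open>C\<close>: shift
  \<open>f\<close> so that its minimum is \<open>0\<close>; then only the positive part of \<open>c\<close>, of mass \<open>\<Sum>|c|/2\<close>, contributes.\<close>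
lemma sum_mult_le_oscillation:
  fixes f c :: "'a \<Rightarrow> real"
  assumes fin: "finite \<sigma>" and ne: "\<sigma> \<noteq> {}"
    and c0: "(\<Sum>v\<in>\<sigma>. c v) = 0"
    and osc: "\<forall>v\<in>\<sigma>. \<forall>w\<in>\<sigma>. f v \<le> f w + C"
  shows "(\<Sum>v\<in>\<sigma>. c v * f v) \<le> C * (1/2 * (\<Sum>v\<in>\<sigma>. \<bar>c v\<bar>))"
proof -
  define m where "m = Min (f ` \<sigma>)"
  have "m \<in> f ` \<sigma>" using fin ne unfolding m_def by simp
  then obtain w where w: "w \<in> \<sigma>" "f w = m" by auto
  have "(\<Sum>v\<in>\<sigma>. c v * f v) = (\<Sum>v\<in>\<sigma>. c v * (f v - m)) + (\<Sum>v\<in>\<sigma>. c v) * m"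
    by (simp add: algebra_simps sum.distrib sum_distrib_left sum_distrib_right sum_subtractf)
  also have "\<dots> \<le> (\<Sum>v\<in>\<sigma>. max (c v) 0 * C)"
  proof -
    have "c v * (f v - m) \<le> max (c v) 0 * C" if v: "v \<in> \<sigma>" for v
    proof -
      have "0 \<le> f v - m" using fin v unfolding m_def by simp
      moreover have "f v - m \<le> C" using osc v w by force
      ultimately show ?thesis
        by (cases "c v \<ge> 0") (auto simp: mult_left_mono mult_nonneg_nonpos2 max_def)
    qed
    then show ?thesis using c0 by (simp add: sum_mono)
  qed
  also have "\<dots> = C * (\<Sum>v\<in>\<sigma>. (\<bar>c v\<bar> + c v) / 2)"
    by (simp add: sum_distrib_left mult.commute) (intro sum.cong refl, simp add: max_def)
  also have "\<dots> = C * (1/2 * (\<Sum>v\<in>\<sigma>. \<bar>c v\<bar>))"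
    using c0 by (simp add: sum_divide_distrib[symmetric] sum.distrib)
  finally show ?thesis .
qed

lemma Dhat_supp_superset:
  assumes "finite S" "supp a \<subseteq> S"
  shows "Dhat d x a = (\<Sum>u\<in>supp x. \<Sum>v\<in>S. x u * a v * d u v)"
  unfolding Dhat_def
  using assms by (intro sum.cong refl sum.mono_neutral_left) (auto simp: supp_def)

lemma Dhat_lipschitz_in_simplex:
  assumes sc: "simplicial_complex K"
    and m: "metric_on (verts K) dh"
    and C: "C > 0"
    and lip: "\<forall>u\<in>verts K. \<forall>v\<in>verts K. ereal (dh u v) \<le> ereal C * graph_dist K u v"
    and px: "point K x" and pa: "point K a" and pb: "point K b"
    and \<sigma>: "\<sigma> \<in> K" and sa: "supp a \<subseteq> \<sigma>" and sb: "supp b \<subseteq> \<sigma>"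
  shows "Dhat dh x b - Dhat dh x a \<le> C * d_simplex \<sigma> a b"
proof -
  have fin: "finite \<sigma>" "\<sigma> \<noteq> {}" using simplicial_complex_finite[OF sc \<sigma>] by auto
  have inner: "(\<Sum>v\<in>\<sigma>. (b v - a v) * dh u v) \<le> C * d_simplex \<sigma> a b"
    if u: "u \<in> supp x" for u
  proof -
    have uK: "u \<in> verts K" using u px unfolding point_def verts_def by auto
    have "(\<Sum>v\<in>\<sigma>. (b v - a v) * dh u v) \<le> C * (1/2 * (\<Sum>v\<in>\<sigma>. \<bar>b v - a v\<bar>))"
    proof (rule sum_mult_le_oscillation[OF fin])
      show "(\<Sum>v\<in>\<sigma>. b v - a v) = 0"
        using point_sum_superset[OF pa fin(1) sa] point_sum_superset[OF pb fin(1) sb]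
        by (simp add: sum_subtractf)
      show "\<forall>v\<in>\<sigma>. \<forall>w\<in>\<sigma>. dh u v \<le> dh u w + C"
      proof (intro ballI)
        fix v w assume v: "v \<in> \<sigma>" and w: "w \<in> \<sigma>"
        have "dh u v \<le> dh u w + dh w v"
          using m uK v w \<sigma> unfolding metric_on_def verts_def by blast
        then show "dh u v \<le> dh u w + C"
          using simplex_diameter_le[OF sc m C lip \<sigma> w v] by simp
      qed
    qed
    then show ?thesis unfolding d_simplex_def by (simp add: abs_minus_commute)
  qed
  have "Dhat dh x b - Dhat dh x a = (\<Sum>u\<in>supp x. x u * (\<Sum>v\<in>\<sigma>. (b v - a v) * dh u v))"
    using Dhat_supp_superset[OF fin(1) sa] Dhat_supp_superset[OF fin(1) sb]
    by (simp add: sum_subtractf[symmetric] sum_distrib_left algebra_simps)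
  also have "\<dots> \<le> (\<Sum>u\<in>supp x. x u * (C * d_simplex \<sigma> a b))"
    using px inner by (intro sum_mono mult_left_mono) (auto simp: point_def)
  also have "\<dots> = C * d_simplex \<sigma> a b"
    using px unfolding point_def by (simp add: sum_distrib_right[symmetric] mult.commute)
  finally show ?thesis .
qed

lemma Dhat_self_le:
  assumes sc: "simplicial_complex K"
    and m: "metric_on (verts K) dh"
    and C: "C > 0"
    and lip: "\<forall>u\<in>verts K. \<forall>v\<in>verts K. ereal (dh u v) \<le> ereal C * graph_dist K u v"
    and px: "point K x"
  shows "Dhat dh x x \<le> C"
proof -
  have x0: "\<And>u. 0 \<le> x u" and x1: "sum x (supp x) = 1" using px unfolding point_def by auto
  have "Dhat dh x x \<le> (\<Sum>u\<in>supp x. \<Sum>v\<in>supp x. x u * x v * C)"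
    unfolding Dhat_def
    using simplex_diameter_le[OF sc m C lip point_supp(2)[OF sc px]] x0
    by (intro sum_mono mult_left_mono) auto
  also have "\<dots> = C"
    using x1 by (simp add: sum_distrib_left[symmetric] sum_distrib_right[symmetric])
  finally show ?thesis .
qed

lemma l1_pathD:
  assumes "l1_path K x y as ss"
  shows "length as = Suc (length ss)" "as ! 0 = x" "as ! length ss = y"
    and "\<And>i. i \<le> length ss \<Longrightarrow> point K (as ! i)"
    and "\<And>i. i < length ss \<Longrightarrow>
           ss ! i \<in> K \<and> supp (as ! i) \<subseteq> ss ! i \<and> supp (as ! Suc i) \<subseteq> ss ! i"
  using assms unfolding l1_path_def
  by (auto simp: hd_conv_nth last_conv_nth less_Suc_eq_le[symmetric])

lemma Dhat_path_increment_le: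
  assumes sc: "simplicial_complex K"
    and m: "metric_on (verts K) dh"
    and C: "C > 0"
    and lip: "\<forall>u\<in>verts K. \<forall>v\<in>verts K. ereal (dh u v) \<le> ereal C * graph_dist K u v"
    and px: "point K x"
    and p: "l1_path K x y as ss"
  shows "Dhat dh x y - Dhat dh x x \<le> C * path_length as ss"
proof -
  note path = l1_pathD[OF p]
  have "Dhat dh x y - Dhat dh x x
      = (\<Sum>i<length ss. Dhat dh x (as ! Suc i) - Dhat dh x (as ! i))"
    using path(2,3) sum_lessThan_telescope[of "\<lambda>i. Dhat dh x (as ! i)"] by simp
  also have "\<dots> \<le> (\<Sum>i<length ss. C * d_simplex (ss ! i) (as ! i) (as ! Suc i))"
    using path(4,5)
    by (intro sum_mono Dhat_lipschitz_in_simplex[OF sc m C lip px]) auto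
  also have "\<dots> = C * path_length as ss"
    unfolding path_length_def by (simp add: sum_distrib_left)
  finally show ?thesis .
qed

lemma d_simplex_supp_superset:
  assumes "finite \<sigma>" "finite U" "supp a \<union> supp b \<subseteq> \<sigma>" "supp a \<union> supp b \<subseteq> U"
  shows "d_simplex \<sigma> a b = 1/2 * (\<Sum>u\<in>U. \<bar>a u - b u\<bar>)"
proof -
  have "(\<Sum>u\<in>S. \<bar>a u - b u\<bar>) = (\<Sum>u\<in>supp a \<union> supp b. \<bar>a u - b u\<bar>)"
    if "finite S" "supp a \<union> supp b \<subseteq> S" for S
    using that by (intro sum.mono_neutral_right) (auto simp: supp_def)
  then show ?thesis using assms unfolding d_simplex_def by simp
qed

lemma path_length_ge_l1_dist:
  assumes sc: "simplicial_complex K" and p: "l1_path K x y as ss"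
  obtains U where "finite U" "supp x \<subseteq> U" "supp y \<subseteq> U"
    "1/2 * (\<Sum>u\<in>U. \<bar>x u - y u\<bar>) \<le> path_length as ss"
proof
  note path = l1_pathD[OF p]
  let ?n = "length ss" and ?a = "(!) as"
  define U where "U = (\<Union>i\<le>?n. supp (?a i))"
  show finU: "finite U" unfolding U_def using point_supp(1)[OF sc path(4)] by auto
  have subU: "\<And>i. i \<le> ?n \<Longrightarrow> supp (?a i) \<subseteq> U" unfolding U_def by auto
  then show "supp x \<subseteq> U" "supp y \<subseteq> U" using path(2,3) by (metis le0, metis order_refl)
  have "x u - y u = (\<Sum>i<?n. ?a i u - ?a (Suc i) u)" for u
    using path(2,3) sum_lessThan_telescope[of "\<lambda>i. ?a i u" ?n] by (simp add: sum_subtractf)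
  then have "(\<Sum>u\<in>U. \<bar>x u - y u\<bar>) = (\<Sum>u\<in>U. \<bar>\<Sum>i<?n. ?a i u - ?a (Suc i) u\<bar>)"
    by simp
  also have "\<dots> \<le> (\<Sum>u\<in>U. \<Sum>i<?n. \<bar>?a i u - ?a (Suc i) u\<bar>)"
    by (intro sum_mono sum_abs)
  also have "\<dots> = (\<Sum>i<?n. \<Sum>u\<in>U. \<bar>?a i u - ?a (Suc i) u\<bar>)" by (rule sum.swap)
  also have "\<dots> = 2 * path_length as ss"
    unfolding path_length_def sum_distrib_left
  proof (intro sum.cong refl)
    fix i assume i: "i \<in> {..<?n}"
    have "finite (ss ! i)" using path(5) i simplicial_complex_finite[OF sc] by auto
    then show "(\<Sum>u\<in>U. \<bar>?a i u - ?a (Suc i) u\<bar>) = 2 * d_simplex (ss ! i) (?a i) (?a (Suc i))"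
      using d_simplex_supp_superset[OF _ finU, of "ss ! i" "?a i" "?a (Suc i)"]
        path(5)[of i] subU[of i] subU[of "Suc i"] i
      by auto
  qed
  finally show "1/2 * (\<Sum>u\<in>U. \<bar>x u - y u\<bar>) \<le> path_length as ss" by simp
qed

lemma l1_dist_disjoint_points:
  assumes px: "point K x" and py: "point K y" and dj: "supp x \<inter> supp y = {}"
    and U: "finite U" "supp x \<subseteq> U" "supp y \<subseteq> U"
  shows "(\<Sum>u\<in>U. \<bar>x u - y u\<bar>) = 2"
proof -
  have "\<bar>x u - y u\<bar> = x u + y u" for u
    using dj px py by (cases "x u = 0") (auto simp: supp_def point_def)
  then have "(\<Sum>u\<in>U. \<bar>x u - y u\<bar>) = (\<Sum>u\<in>U. x u + y u)" by simp
  also have "\<dots> = 2"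
    using point_sum_superset[OF px U(1,2)] point_sum_superset[OF py U(1,3)]
    by (simp add: sum.distrib)
  finally show ?thesis .
qed

lemma Dhat_le_path_length:
  assumes sc: "simplicial_complex K"
    and m: "metric_on (verts K) dh"
    and C: "C > 0"
    and lip: "\<forall>u\<in>verts K. \<forall>v\<in>verts K. ereal (dh u v) \<le> ereal C * graph_dist K u v"
    and px: "point K x" and py: "point K y"
    and dj: "supp x \<inter> supp y = {}"
    and p: "l1_path K x y as ss"
  shows "Dhat dh x y \<le> 3 * C * path_length as ss"
proof -
  obtain U where "finite U" "supp x \<subseteq> U" "supp y \<subseteq> U"
    and "1/2 * (\<Sum>u\<in>U. \<bar>x u - y u\<bar>) \<le> path_length as ss"
    using path_length_ge_l1_dist[OF sc p] by blast
  then have L1: "1 \<le> path_length as ss" using l1_dist_disjoint_points[OF px py dj] by simp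
  have "Dhat dh x y \<le> C + C * path_length as ss"
    using Dhat_path_increment_le[OF sc m C lip px p] Dhat_self_le[OF sc m C lip px] by simp
  also have "\<dots> \<le> 3 * C * path_length as ss"
    using C L1 mult_left_mono[OF L1, of C] by simp
  finally show ?thesis .
qed

theorem mainTheorem5:
  fixes K :: "'v set set" and dh :: "'v \<Rightarrow> 'v \<Rightarrow> real" and C :: real
    and x y :: "'v \<Rightarrow> real"
  assumes "simplicial_complex K"
    and "metric_on (verts K) dh"
    and "C > 0"
    and "\<forall>u\<in>verts K. \<forall>v\<in>verts K. ereal (dh u v) \<le> ereal C * graph_dist K u v"
    and "point K x" and "point K y"
    and "supp x \<inter> supp y = {}"
  shows "ereal (Dhat dh x y) \<le> ereal (3 * C) * dX K x y"
proof -
  have C3: "3 * C > 0" using assms(3) by simp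
  have "ereal (Dhat dh x y / (3 * C)) \<le> dX K x y"
    unfolding dX_def
  proof (rule Inf_greatest, clarify)
    fix as ss assume "l1_path K x y as ss"
    then have "Dhat dh x y \<le> 3 * C * path_length as ss" by (rule Dhat_le_path_length[OF assms])
    then show "ereal (Dhat dh x y / (3 * C)) \<le> ereal (path_length as ss)"
      using C3 by (simp add: pos_divide_le_eq mult.commute)
  qed
  then have "ereal (3 * C) * ereal (Dhat dh x y / (3 * C)) \<le> ereal (3 * C) * dX K x y"
    using C3 by (intro ereal_mult_left_mono) auto
  then show ?thesis using C3 by simp
qed

end
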